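(* Let $(X,d)$ be a totally bounded metric space, $\emptyset\ne F\subseteq X$ with representation $(\tilde F_k)$, and let $(x_n)$ be a Cauchy sequence in $X$ with a selfmajorizing rate of metastability $\Psi$. (i) Assume $(x_n)$ is asymptotically regular w.r.t. $F$ with $\Phi^+$ a selfmajorizing rate of metastability for the asymptotic regularity. Then for all $k\in\mathbb{N}$ and $g:\mathbb{N}\to\mathbb{N}$ there exists $N\le\Omega_{k,g}(\Psi,\Phi^+)$ such that for all $i,j\in[N,N+g(N)]$: $d(x_i,x_j)\le\frac1{k+1}$ and $x_i\in AF_k$. (ii) Assume $(x_n)$ is asymptotically regular w.r.t. $F$ with $\Phi^{++}$ a rate of asymptotic regularity. Then for all $k\in\mathbb{N}$ and $g:\mathbb{N}\to\mathbb{N}$ there exists $N\le\tilde\Omega_{k,g}(\Psi,(\Phi^{++})^M)$ such that $d(x_i,x_j)\le\frac1{k+1}$ for all $i,j\in[N,N+g(N)]$ and $x_m\in AF_k$ for all $m\ge N$.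
   Context: Representation: $F=\bigcap_k\tilde F_k$, $AF_k:=\bigcap_{l\le k}\tilde F_l$. A rate of metastability for $(x_n)$ is $\Psi:\mathbb{N}\times\mathbb{N}^{\mathbb{N}}\to\mathbb{N}$ such that for all $k,g$ there is $N\le\Psi(k,g)$ with $d(x_i,x_j)\le\frac1{k+1}$ for all $i,j\in[N,N+g(N)]$. $(x_n)$ is asymptotically regular w.r.t. $F$ if for all $k$ there is $N$ with $x_m\in AF_k$ for all $m\ge N$; a rate of metastability for this is $\Phi^+:\mathbb{N}\times\mathbb{N}^{\mathbb{N}}\to\mathbb{N}$ such that for all $k,g$ there is $N\le\Phi^+(k,g)$ with $x_m\in AF_k$ for all $m\in[N,N+g(N)]$; a rate of asymptotic regularity is $\Phi^{++}:\mathbb{N}\to\mathbb{N}$ with $x_n\in AF_k$ for all $n\ge\Phi^{++}(k)$. For $f:\mathbb{N}\to\mathbb{N}$, $f^M(n):=\max\{f(i)\mid i\le n\}$. For $f,f':\mathbb{N}\to\mathbb{N}$, $f'\gtrsim f$ means: for all $n^*\ge n$, $f'(n^* )\ge f'(n)$ and $f'(n^* )\ge f(n)$. For $\Phi,\Phi^*:\mathbb{N}\times\mathbb{N}^{\mathbb{N}}\to\mathbb{N}$, $\Phi^*\gtrsim\Phi$ means: for all $k,k'\in\mathbb{N}$ and $g,g':\mathbb{N}\to\mathbb{N}$ with $k'\ge k$ and $g'\gtrsim g$, $\Phi^*(k',g')\ge\Phi^*(k,g)$ and $\Phi^*(k',g')\ge\Phi(k,g)$; $\Phi$ is selfmajorizing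 if $\Phi\gtrsim\Phi$. Given $k$ and $g$: $g^*(n):=n+g^M(n)$; $\tilde g_l(m):=g^*(\max\{l,m\})$; for $\delta:\mathbb{N}\times\mathbb{N}^{\mathbb{N}}\to\mathbb{N}$, $h_{k,g,\delta}(n):=g^*(\max\{n,\delta(k,\tilde g_n)\})$; $\Omega_{k,g}(\delta,\theta):=\max\{\delta(k,h_{k,g,\theta}),\ \theta(k,\tilde g_{\delta(k,h_{k,g,\theta})})\}$; $g_l(n):=g^M(n+l)+l$; $\tilde\Omega_{k,g}(\delta,f):=\delta(k,g_{f(k)})+f(k)$ for $f:\mathbb{N}\to\mathbb{N}$. *)

theory Defs
  imports "HOL-Analysis.Analysis"
begin

definition AF :: "(nat \<Rightarrow> 'a set) \<Rightarrow> nat \<Rightarrow> 'a set" where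
  "AF Ft k = (\<Inter>l\<in>{..k}. Ft l)"

definition meta_rate :: "(nat \<Rightarrow> 'a::metric_space) \<Rightarrow> (nat \<Rightarrow> (nat \<Rightarrow> nat) \<Rightarrow> nat) \<Rightarrow> bool" where
  "meta_rate x Psi \<longleftrightarrow> (\<forall>k g. \<exists>N\<le>Psi k g. \<forall>i\<in>{N..N + g N}. \<forall>j\<in>{N..N + g N}.
      dist (x i) (x j) \<le> 1 / (real k + 1))"

definition asym_reg :: "(nat \<Rightarrow> 'a) \<Rightarrow> (nat \<Rightarrow> 'a set) \<Rightarrow> bool" where
  "asym_reg x Ft \<longleftrightarrow> (\<forall>k. \<exists>N. \<forall>m\<ge>N. x m \<in> AF Ft k)"

definition ar_meta_rate :: "(nat \<Rightarrow> 'a) \<Rightarrow> (nat \<Rightarrow> 'a set) \<Rightarrow> (nat \<Rightarrow> (nat \<Rightarrow> nat) \<Rightarrow> nat) \<Rightarrow> bool" where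
  "ar_meta_rate x Ft Phi \<longleftrightarrow> (\<forall>k g. \<exists>N\<le>Phi k g. \<forall>m\<in>{N..N + g N}. x m \<in> AF Ft k)"

definition ar_rate :: "(nat \<Rightarrow> 'a) \<Rightarrow> (nat \<Rightarrow> 'a set) \<Rightarrow> (nat \<Rightarrow> nat) \<Rightarrow> bool" where
  "ar_rate x Ft Phi \<longleftrightarrow> (\<forall>k n. Phi k \<le> n \<longrightarrow> x n \<in> AF Ft k)"

definition fM :: "(nat \<Rightarrow> nat) \<Rightarrow> nat \<Rightarrow> nat" where
  "fM f n = Max (f ` {..n})"

definition majorizes :: "(nat \<Rightarrow> nat) \<Rightarrow> (nat \<Rightarrow> nat) \<Rightarrow> bool" where
  "majorizes f' f \<longleftrightarrow> (\<forall>n ns. n \<le> ns \<longrightarrow> f' ns \<ge> f' n \<and> f' ns \<ge> f n)"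

definition majorizes2 :: "(nat \<Rightarrow> (nat \<Rightarrow> nat) \<Rightarrow> nat) \<Rightarrow> (nat \<Rightarrow> (nat \<Rightarrow> nat) \<Rightarrow> nat) \<Rightarrow> bool" where
  "majorizes2 Phis Phi \<longleftrightarrow> (\<forall>k k' g g'. k \<le> k' \<and> majorizes g' g \<longrightarrow>
      Phis k' g' \<ge> Phis k g \<and> Phis k' g' \<ge> Phi k g)"

definition selfmaj :: "(nat \<Rightarrow> (nat \<Rightarrow> nat) \<Rightarrow> nat) \<Rightarrow> bool" where
  "selfmaj Phi \<longleftrightarrow> majorizes2 Phi Phi"

definition gstar :: "(nat \<Rightarrow> nat) \<Rightarrow> nat \<Rightarrow> nat" where
  "gstar g n = n + fM g n"

definition gtilde :: "(nat \<Rightarrow> nat) \<Rightarrow> nat \<Rightarrow> nat \<Rightarrow> nat" where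
  "gtilde g l m = gstar g (max l m)"

definition hfun :: "nat \<Rightarrow> (nat \<Rightarrow> nat) \<Rightarrow> (nat \<Rightarrow> (nat \<Rightarrow> nat) \<Rightarrow> nat) \<Rightarrow> nat \<Rightarrow> nat" where
  "hfun k g \<delta> n = gstar g (max n (\<delta> k (gtilde g n)))"

definition Omega :: "nat \<Rightarrow> (nat \<Rightarrow> nat) \<Rightarrow> (nat \<Rightarrow> (nat \<Rightarrow> nat) \<Rightarrow> nat)
    \<Rightarrow> (nat \<Rightarrow> (nat \<Rightarrow> nat) \<Rightarrow> nat) \<Rightarrow> nat" where
  "Omega k g \<delta> \<theta> = max (\<delta> k (hfun k g \<theta>)) (\<theta> k (gtilde g (\<delta> k (hfun k g \<theta>))))"

definition glow :: "(nat \<Rightarrow> nat) \<Rightarrow> nat \<Rightarrow> nat \<Rightarrow> nat" where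
  "glow g l n = fM g (n + l) + l"

definition Omega_tilde :: "nat \<Rightarrow> (nat \<Rightarrow> nat) \<Rightarrow> (nat \<Rightarrow> (nat \<Rightarrow> nat) \<Rightarrow> nat)
    \<Rightarrow> (nat \<Rightarrow> nat) \<Rightarrow> nat" where
  "Omega_tilde k g \<delta> f = \<delta> k (glow g (f k)) + f k"

end

theory Submission
  imports Defs
begin

text \<open>Neither total boundedness, nor Cauchyness, nor the set \<open>F\<close> itself enter the argument:
  both parts are pure combinations of rates. For (i), first run the metastability rate of the
  asymptotic regularity on the counterfunction \<open>gtilde g N\<^sub>1\<close>, where \<open>N\<^sub>1\<close> is the point
  delivered by \<open>\<Psi>\<close> on the counterfunction \<open>h\<close>; the point \<open>N\<^sub>2\<close> obtained is bounded
  uniformly in \<open>N\<^sub>1\<close> because \<open>\<Phi>\<^sup>+\<close> is selfmajorizing, and \<open>h\<close> is built so that the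
  \<open>\<Psi>\<close>-interval at \<open>N\<^sub>1\<close> covers the interval at \<open>max N\<^sub>1 N\<^sub>2\<close>. For (ii), shifting the
  counterfunction by \<open>(\<Phi>\<^sup>+\<^sup>+)\<^sup>M k\<close> moves the metastable interval past the point from which
  \<open>x\<^sub>m \<in> AF\<^sub>k\<close> holds forever.\<close>

lemma fM_ge: "g n \<le> fM g n"
  unfolding fM_def by (rule Max_ge) auto

lemma fM_mono: "n \<le> m \<Longrightarrow> fM g n \<le> fM g m"
  unfolding fM_def by (rule Max_mono) auto

lemma add_le_gstar: "n + g n \<le> gstar g n"
  unfolding gstar_def using fM_ge[of g n] by simp

lemma gstar_mono: "n \<le> m \<Longrightarrow> gstar g n \<le> gstar g m"
  unfolding gstar_def using fM_mono[of n m g] by simp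

lemma majorizes_gtilde: "l \<le> l' \<Longrightarrow> majorizes (gtilde g l') (gtilde g l)"
  unfolding majorizes_def gtilde_def by (auto intro!: gstar_mono)

lemma ar_rate_fM: "ar_rate x Ft Phi \<Longrightarrow> ar_rate x Ft (fM Phi)"
  unfolding ar_rate_def using fM_ge[of Phi] le_trans by blast

lemma meta_rate_ar_meta_rate_combined:
  assumes Psi: "meta_rate x Psi"
    and Phi: "ar_meta_rate x Ft Phi" and Phi_maj: "selfmaj Phi"
  shows "\<exists>N\<le>Omega k g Psi Phi. \<forall>i\<in>{N..N + g N}. \<forall>j\<in>{N..N + g N}.
           dist (x i) (x j) \<le> 1 / (real k + 1) \<and> x i \<in> AF Ft k"
proof -
  define h where "h = hfun k g Phi"
  obtain N\<^sub>1 where N\<^sub>1: "N\<^sub>1 \<le> Psi k h"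
    and close: "\<forall>i\<in>{N\<^sub>1..N\<^sub>1 + h N\<^sub>1}. \<forall>j\<in>{N\<^sub>1..N\<^sub>1 + h N\<^sub>1}. dist (x i) (x j) \<le> 1 / (real k + 1)"
    using Psi unfolding meta_rate_def by blast
  obtain N\<^sub>2 where N\<^sub>2: "N\<^sub>2 \<le> Phi k (gtilde g N\<^sub>1)"
    and in_AF: "\<forall>m\<in>{N\<^sub>2..N\<^sub>2 + gtilde g N\<^sub>1 N\<^sub>2}. x m \<in> AF Ft k"
    using Phi unfolding ar_meta_rate_def by blast
  define N where "N = max N\<^sub>1 N\<^sub>2"
  have "Phi k (gtilde g N\<^sub>1) \<le> Phi k (gtilde g (Psi k h))"
    using Phi_maj majorizes_gtilde[OF N\<^sub>1] unfolding selfmaj_def majorizes2_def by blast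
  then have N_le: "N \<le> Omega k g Psi Phi"
    using N\<^sub>1 N\<^sub>2 unfolding N_def Omega_def h_def by auto
  have "N \<le> max N\<^sub>1 (Phi k (gtilde g N\<^sub>1))"
    using N\<^sub>2 unfolding N_def by auto
  then have "N + g N \<le> gstar g (max N\<^sub>1 (Phi k (gtilde g N\<^sub>1)))"
    using add_le_gstar[of N g] gstar_mono le_trans by blast
  then have sub_close: "{N..N + g N} \<subseteq> {N\<^sub>1..N\<^sub>1 + h N\<^sub>1}"
    unfolding h_def hfun_def N_def by auto
  have sub_AF: "{N..N + g N} \<subseteq> {N\<^sub>2..N\<^sub>2 + gtilde g N\<^sub>1 N\<^sub>2}"
    using add_le_gstar[of N g] unfolding gtilde_def N_def by auto
  show ?thesis
    using N_le close in_AF sub_close sub_AF by blast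
qed

lemma meta_rate_ar_rate_combined:
  assumes Psi: "meta_rate x Psi" and Phi: "ar_rate x Ft Phi"
  shows "\<exists>N\<le>Omega_tilde k g Psi (fM Phi).
           (\<forall>i\<in>{N..N + g N}. \<forall>j\<in>{N..N + g N}. dist (x i) (x j) \<le> 1 / (real k + 1))
           \<and> (\<forall>m\<ge>N. x m \<in> AF Ft k)"
proof -
  define n\<^sub>0 where "n\<^sub>0 = fM Phi k"
  obtain N' where N': "N' \<le> Psi k (glow g n\<^sub>0)"
    and close: "\<forall>i\<in>{N'..N' + glow g n\<^sub>0 N'}. \<forall>j\<in>{N'..N' + glow g n\<^sub>0 N'}.
                  dist (x i) (x j) \<le> 1 / (real k + 1)"
    using Psi unfolding meta_rate_def by blast
  have "{N' + n\<^sub>0..N' + n\<^sub>0 + g (N' + n\<^sub>0)} \<subseteq> {N'..N' + glow g n\<^sub>0 N'}"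
    using fM_ge[of g "N' + n\<^sub>0"] unfolding glow_def by auto
  moreover have "\<forall>m\<ge>N' + n\<^sub>0. x m \<in> AF Ft k"
    using ar_rate_fM[OF Phi] unfolding ar_rate_def n\<^sub>0_def by auto
  moreover have "N' + n\<^sub>0 \<le> Omega_tilde k g Psi (fM Phi)"
    using N' unfolding Omega_tilde_def n\<^sub>0_def by simp
  ultimately show ?thesis
    using close by blast
qed

theorem theorem5p8:
  fixes X F :: "'a::metric_space set" and Ft :: "nat \<Rightarrow> 'a set"
    and x :: "nat \<Rightarrow> 'a" and Psi :: "nat \<Rightarrow> (nat \<Rightarrow> nat) \<Rightarrow> nat"
  assumes "totally_bounded X"
    and "F \<subseteq> X" and "F \<noteq> {}"
    and "F = (\<Inter>k. Ft k)"
    and "\<And>n. x n \<in> X"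
    and "Cauchy x"
    and "meta_rate x Psi" and "selfmaj Psi"
  shows "(\<forall>Phip. asym_reg x Ft \<and> ar_meta_rate x Ft Phip \<and> selfmaj Phip \<longrightarrow>
            (\<forall>k g. \<exists>N\<le>Omega k g Psi Phip. \<forall>i\<in>{N..N + g N}. \<forall>j\<in>{N..N + g N}.
                dist (x i) (x j) \<le> 1 / (real k + 1) \<and> x i \<in> AF Ft k))
       \<and> (\<forall>Phipp. asym_reg x Ft \<and> ar_rate x Ft Phipp \<longrightarrow>
            (\<forall>k g. \<exists>N\<le>Omega_tilde k g Psi (fM Phipp).
                (\<forall>i\<in>{N..N + g N}. \<forall>j\<in>{N..N + g N}. dist (x i) (x j) \<le> 1 / (real k + 1))
                \<and> (\<forall>m\<ge>N. x m \<in> AF Ft k)))"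
  using meta_rate_ar_meta_rate_combined[OF \<open>meta_rate x Psi\<close>]
    meta_rate_ar_rate_combined[OF \<open>meta_rate x Psi\<close>]
  by blast

end
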